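(* Let $\psi\colon\mathcal B\to\mathcal A$ be a quasi-isomorphism of DGAs (a DGA morphism inducing an isomorphism $\psi^*$ in cohomology). (1) Suppose $a,b_1,\dots,b_n\in\mathcal A$ are closed, $|a|$ is even and each $a\wedge b_i$ is exact, so that $\langle a;b_1,\dots,b_n\rangle$ is defined, and let $a',b_i'\in\mathcal B$ be closed elements with $[\psi(a')]=[a]$ and $[\psi(b_i')]=[b_i]$. Then $\langle a';b_1',\dots,b_n'\rangle$ is defined in $\mathcal B$ and $\psi^*(\langle a';b_1',\dots,b_n'\rangle)=\langle a;b_1,\dots,b_n\rangle$. (2) Conversely, if $\langle a';b_1',\dots,b_n'\rangle$ is a defined $a'$-Massey product in $\mathcal B$ and $a=\psi(a')$, $b_i=\psi(b_i')$, then $\psi^*(\langle a';b_1',\dots,b_n'\rangle)=\langle a;b_1,\dots,b_n\rangle$.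
   Context: A DGA is a graded-commutative differential graded algebra over $\mathbb R$; $|x|$ denotes degree and $\overline{x}=(-1)^{|x|}x$. Given closed $a,b_1,\dots,b_n$ with $|a|$ even and each $a\wedge b_i$ exact, the $a$-Massey product is $\langle a;b_1,\dots,b_n\rangle=\{[\sum_{i=1}^n\overline{\xi_1}\wedge\cdots\wedge\overline{\xi_{i-1}}\wedge b_i\wedge\xi_{i+1}\wedge\cdots\wedge\xi_n] : d\xi_i=a\wedge b_i\}$, a subset of cohomology. *)

theory Defs
  imports Complex_Main
begin

text \<open>A (nonnegatively) graded-commutative DGA over the reals, carried by a type
 'a of class real_algebra_1 (associative unital real algebra), with grading
 G k (the homogeneous elements of degree k, k an integer, zero for k < 0) and
 differential d.\<close>

definition sgn_deg :: "int \<Rightarrow> real" where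
  "sgn_deg k = (if even k then 1 else -1)"

definition dga :: "(int \<Rightarrow> 'a::real_algebra_1 set) \<Rightarrow> ('a \<Rightarrow> 'a) \<Rightarrow> bool" where
  "dga G d \<longleftrightarrow>
     (\<forall>k. 0 \<in> G k \<and> (\<forall>x\<in>G k. \<forall>y\<in>G k. x + y \<in> G k) \<and> (\<forall>c. \<forall>x\<in>G k. c *\<^sub>R x \<in> G k))
   \<and> (\<forall>k<0. G k = {0})
   \<and> (\<forall>x. \<exists>!c::int \<Rightarrow> 'a. finite {k. c k \<noteq> 0} \<and> (\<forall>k. c k \<in> G k)
              \<and> x = (\<Sum>k\<in>{k. c k \<noteq> 0}. c k))
   \<and> 1 \<in> G 0
   \<and> (\<forall>j k x y. x \<in> G j \<longrightarrow> y \<in> G k \<longrightarrow> x * y \<in> G (j + k))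
   \<and> (\<forall>j k x y. x \<in> G j \<longrightarrow> y \<in> G k \<longrightarrow> x * y = sgn_deg (j * k) *\<^sub>R (y * x))
   \<and> linear d
   \<and> (\<forall>k. \<forall>x\<in>G k. d x \<in> G (k + 1))
   \<and> (\<forall>x. d (d x) = 0)
   \<and> (\<forall>j x y. x \<in> G j \<longrightarrow> d (x * y) = d x * y + sgn_deg j *\<^sub>R (x * d y))"

definition dga_hom ::
  "(int \<Rightarrow> 'b::real_algebra_1 set) \<Rightarrow> ('b \<Rightarrow> 'b) \<Rightarrow> (int \<Rightarrow> 'a::real_algebra_1 set) \<Rightarrow> ('a \<Rightarrow> 'a)
    \<Rightarrow> ('b \<Rightarrow> 'a) \<Rightarrow> bool" where
  "dga_hom GB dB GA dA \<psi> \<longleftrightarrow> linear \<psi> \<and> \<psi> 1 = 1 \<and> (\<forall>x y. \<psi> (x * y) = \<psi> x * \<psi> y)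
     \<and> (\<forall>k. \<psi> ` GB k \<subseteq> GA k) \<and> (\<forall>x. \<psi> (dB x) = dA (\<psi> x))"

definition exact_in :: "(int \<Rightarrow> 'a set) \<Rightarrow> ('a \<Rightarrow> 'a) \<Rightarrow> int \<Rightarrow> 'a \<Rightarrow> bool" where
  "exact_in G d k x \<longleftrightarrow> (\<exists>y\<in>G (k - 1). x = d y)"

definition cls :: "(int \<Rightarrow> 'a::real_vector set) \<Rightarrow> ('a \<Rightarrow> 'a) \<Rightarrow> int \<Rightarrow> 'a \<Rightarrow> 'a set" where
  "cls G d k x = {x + d y | y. y \<in> G (k - 1)}"

definition cohom :: "(int \<Rightarrow> 'a::real_vector set) \<Rightarrow> ('a \<Rightarrow> 'a) \<Rightarrow> int \<Rightarrow> 'a set set" where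
  "cohom G d k = {cls G d k x | x. x \<in> G k \<and> d x = 0}"

definition hmap :: "(int \<Rightarrow> 'a::real_vector set) \<Rightarrow> ('a \<Rightarrow> 'a) \<Rightarrow> int \<Rightarrow> ('b \<Rightarrow> 'a) \<Rightarrow> 'b set \<Rightarrow> 'a set" where
  "hmap GA dA k \<psi> c = cls GA dA k (\<psi> (SOME x. x \<in> c))"

definition quasi_iso ::
  "(int \<Rightarrow> 'b::real_algebra_1 set) \<Rightarrow> ('b \<Rightarrow> 'b) \<Rightarrow> (int \<Rightarrow> 'a::real_algebra_1 set) \<Rightarrow> ('a \<Rightarrow> 'a)
    \<Rightarrow> ('b \<Rightarrow> 'a) \<Rightarrow> bool" where
  "quasi_iso GB dB GA dA \<psi> \<longleftrightarrow> dga_hom GB dB GA dA \<psi>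
     \<and> (\<forall>k. bij_betw (hmap GA dA k \<psi>) (cohom GB dB k) (cohom GA dA k))"

definition bar :: "int \<Rightarrow> 'a::real_vector \<Rightarrow> 'a" where
  "bar k x = sgn_deg k *\<^sub>R x"

definition massey_deg :: "nat \<Rightarrow> int \<Rightarrow> (nat \<Rightarrow> int) \<Rightarrow> int" where
  "massey_deg n p q = (int n - 1) * (p - 1) + (\<Sum>i=1..n. q i)"

definition massey ::
  "(int \<Rightarrow> 'a::real_algebra_1 set) \<Rightarrow> ('a \<Rightarrow> 'a) \<Rightarrow> nat \<Rightarrow> int \<Rightarrow> 'a \<Rightarrow> (nat \<Rightarrow> int) \<Rightarrow> (nat \<Rightarrow> 'a)
     \<Rightarrow> 'a set set" where
  "massey G d n p a q b =
     {cls G d (massey_deg n p q)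
        (\<Sum>i=1..n. prod_list (map (\<lambda>j. bar (p + q j - 1) (\<xi> j)) [1..<i]) * b i
                    * prod_list (map \<xi> [i+1..<n+1]))
      | \<xi>. \<forall>i\<in>{1..n}. \<xi> i \<in> G (p + q i - 1) \<and> d (\<xi> i) = a * b i}"

definition massey_defined ::
  "(int \<Rightarrow> 'a::real_algebra_1 set) \<Rightarrow> ('a \<Rightarrow> 'a) \<Rightarrow> nat \<Rightarrow> int \<Rightarrow> 'a \<Rightarrow> (nat \<Rightarrow> int) \<Rightarrow> (nat \<Rightarrow> 'a)
     \<Rightarrow> bool" where
  "massey_defined G d n p a q b \<longleftrightarrow>
     a \<in> G p \<and> d a = 0 \<and> even p
     \<and> (\<forall>i\<in>{1..n}. b i \<in> G (q i) \<and> d (b i) = 0 \<and> exact_in G d (p + q i) (a * b i))"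

end

theory Submission
  imports Defs
begin

text \<open>
  Write the representative of a defining system \<open>\<xi>\<close> (so \<open>d \<xi>_i = a b_i\<close>) through its tails
  \<open>S_m = \<Sum>_{i \<ge> m} bar \<xi>_m \<cdots> bar \<xi>_{i-1} b_i \<xi>_{i+1} \<cdots> \<xi>_n\<close> and \<open>T_m = \<xi>_m \<cdots> \<xi>_n\<close>;
  then \<open>d S_m = 0\<close> and \<open>d T_m = a S_m\<close>. Replacing \<open>a\<close>, \<open>b_i\<close>, \<open>\<xi>_i\<close> by \<open>a + d \<alpha>\<close>, \<open>b_i + d \<beta>_i\<close>
  and \<open>\<xi>_i + \<alpha> (b_i + d \<beta>_i) + a \<beta>_i + d \<theta>_i\<close> changes \<open>S_m\<close> by an exact term \<open>d E_m\<close> and \<open>T_m\<close> by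
  \<open>d F_m + a E_m + \<alpha> S'_m\<close>, by descending induction on \<open>m\<close>. Hence the \<open>a\<close>-Massey set only
  depends on the cohomology classes of \<open>a\<close> and the \<open>b_i\<close>, and a representative does not change
  when the defining system is perturbed by exact terms.

  A DGA morphism \<open>\<psi>\<close> maps defining systems to defining systems. For a quasi-isomorphism, closed
  elements of the target lift to the source modulo exact ones, so every defining system of
  \<open>(\<psi> a', \<psi> b')\<close> is such a perturbation of the image of one of \<open>(a', b')\<close>; and by injectivity
  of \<open>\<psi>\<^sup>*\<close>, \<open>a' b'_i\<close> is exact as soon as \<open>\<psi> (a' b'_i)\<close> is.
\<close>

lemma sgn_deg_even: "even p \<Longrightarrow> sgn_deg p = 1"
  and sgn_deg_mult_even: "even p \<Longrightarrow> sgn_deg (j * p) = 1"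
  and sgn_deg_mult_odd: "odd r \<Longrightarrow> sgn_deg (j * r) = sgn_deg j"
  by (simp_all add: sgn_deg_def)

text \<open>The axioms of \<open>dga\<close> that the argument uses.\<close>

locale graded_dga =
  fixes G :: "int \<Rightarrow> 'a::real_algebra_1 set" and d :: "'a \<Rightarrow> 'a"
  assumes zero_mem: "0 \<in> G k"
    and add_mem: "x \<in> G k \<Longrightarrow> y \<in> G k \<Longrightarrow> x + y \<in> G k"
    and scaleR_mem: "x \<in> G k \<Longrightarrow> c *\<^sub>R x \<in> G k"
    and one_mem: "1 \<in> G 0"
    and mult_mem: "x \<in> G i \<Longrightarrow> y \<in> G j \<Longrightarrow> x * y \<in> G (i + j)"
    and graded_comm: "x \<in> G i \<Longrightarrow> y \<in> G j \<Longrightarrow> x * y = sgn_deg (i * j) *\<^sub>R (y * x)"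
    and linear_d: "linear d"
    and d_mem: "x \<in> G k \<Longrightarrow> d x \<in> G (k + 1)"
    and d_d [simp]: "d (d x) = 0"
    and leibniz: "x \<in> G j \<Longrightarrow> d (x * y) = d x * y + sgn_deg j *\<^sub>R (x * d y)"

lemma graded_dgaI:
  assumes "dga G d" shows "graded_dga G d"
proof -
  from assms[unfolded dga_def] obtain
      vs: "\<forall>k. 0 \<in> G k \<and> (\<forall>x\<in>G k. \<forall>y\<in>G k. x + y \<in> G k) \<and> (\<forall>c. \<forall>x\<in>G k. c *\<^sub>R x \<in> G k)"
    and one: "1 \<in> G 0"
    and mult: "\<forall>j k x y. x \<in> G j \<longrightarrow> y \<in> G k \<longrightarrow> x * y \<in> G (j + k)"
    and comm: "\<forall>j k x y. x \<in> G j \<longrightarrow> y \<in> G k \<longrightarrow> x * y = sgn_deg (j * k) *\<^sub>R (y * x)"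
    and lin: "linear d"
    and dmem: "\<forall>k. \<forall>x\<in>G k. d x \<in> G (k + 1)"
    and dd: "\<forall>x. d (d x) = 0"
    and leib: "\<forall>j x y. x \<in> G j \<longrightarrow> d (x * y) = d x * y + sgn_deg j *\<^sub>R (x * d y)"
    by (elim conjE) (rule that)
  show ?thesis
  proof (rule graded_dga.intro)
    show "0 \<in> G k" for k using vs by blast
    show "x + y \<in> G k" if "x \<in> G k" "y \<in> G k" for x y k using vs that by blast
    show "c *\<^sub>R x \<in> G k" if "x \<in> G k" for c x k using vs that by blast
    show "x * y \<in> G (i + j)" if "x \<in> G i" "y \<in> G j" for x y i j using mult that by blast
    show "x * y = sgn_deg (i * j) *\<^sub>R (y * x)" if "x \<in> G i" "y \<in> G j" for x y i j
      using comm that by blast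
    show "d x \<in> G (k + 1)" if "x \<in> G k" for x k using dmem that by blast
    show "d (d x) = 0" for x using dd by blast
    show "d (x * y) = d x * y + sgn_deg j *\<^sub>R (x * d y)" if "x \<in> G j" for x y j
      using leib that by blast
  qed (fact one lin)+
qed

context graded_dga
begin

lemma neg_mem: "x \<in> G k \<Longrightarrow> - x \<in> G k"
  using scaleR_mem[of x k "-1"] by simp

lemma diff_mem: "x \<in> G k \<Longrightarrow> y \<in> G k \<Longrightarrow> x - y \<in> G k"
  using add_mem[OF _ neg_mem, of x k y] by simp

lemma mult_mem': "x \<in> G i \<Longrightarrow> y \<in> G j \<Longrightarrow> i + j = k \<Longrightarrow> x * y \<in> G k"
  using mult_mem by blast

lemma d_mem': "x \<in> G j \<Longrightarrow> j + 1 = k \<Longrightarrow> d x \<in> G k"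
  using d_mem by blast

lemma d_add [simp]: "d (x + y) = d x + d y"
  and d_diff [simp]: "d (x - y) = d x - d y"
  and d_scaleR [simp]: "d (c *\<^sub>R x) = c *\<^sub>R d x"
  and d_minus [simp]: "d (- x) = - d x"
  and d_zero [simp]: "d 0 = 0"
  using linear_d by (simp_all add: linear_add linear_diff linear_scale linear_neg linear_0)

lemma d_one [simp]: "d 1 = 0"
  using leibniz[OF one_mem, of 1] by (simp add: sgn_deg_def)

lemma leibniz_even: "x \<in> G p \<Longrightarrow> even p \<Longrightarrow> d (x * y) = d x * y + x * d y"
  using leibniz by (simp add: sgn_deg_even)

lemma comm_even: "a \<in> G p \<Longrightarrow> even p \<Longrightarrow> x \<in> G i \<Longrightarrow> x * (a * z) = a * (x * z)"
  using graded_comm[of x i a p] by (simp add: sgn_deg_mult_even flip: mult.assoc)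

lemma comm_odd:
  "\<alpha> \<in> G r \<Longrightarrow> odd r \<Longrightarrow> x \<in> G i \<Longrightarrow> x * (\<alpha> * z) = sgn_deg i *\<^sub>R (\<alpha> * (x * z))"
  using graded_comm[of x i \<alpha> r] by (simp add: sgn_deg_mult_odd flip: mult.assoc)

lemma square_odd: "\<alpha> \<in> G r \<Longrightarrow> odd r \<Longrightarrow> \<alpha> * (\<alpha> * z) = 0"
proof -
  assume "\<alpha> \<in> G r" "odd r"
  then have "\<alpha> * (\<alpha> * z) = - (\<alpha> * (\<alpha> * z))"
    using comm_odd[of \<alpha> r \<alpha> r z] by (simp add: sgn_deg_def)
  then have "(2::real) *\<^sub>R (\<alpha> * (\<alpha> * z)) = 0"
    by (metis neg_eq_iff_add_eq_0 scaleR_2)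
  then show ?thesis by simp
qed

lemma mem_cls_self: "x \<in> cls G d k x"
  unfolding cls_def using zero_mem by force

lemma cls_add_exact: "z \<in> G (k - 1) \<Longrightarrow> cls G d k (x + d z) = cls G d k x"
  unfolding cls_def
proof (intro set_eqI iffI)
  fix w assume z: "z \<in> G (k - 1)"
  { assume "w \<in> {x + d z + d y |y. y \<in> G (k - 1)}"
    then obtain y where "w = x + d z + d y" "y \<in> G (k - 1)" by blast
    then show "w \<in> {x + d y |y. y \<in> G (k - 1)}" using z
      by (intro CollectI exI[of _ "z + y"]) (auto intro: add_mem simp: add.assoc) }
  { assume "w \<in> {x + d y |y. y \<in> G (k - 1)}"
    then obtain y where "w = x + d y" "y \<in> G (k - 1)" by blast
    then show "w \<in> {x + d z + d y |y. y \<in> G (k - 1)}" using z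
      by (intro CollectI exI[of _ "y - z"]) (auto intro: diff_mem) }
qed

lemma cls_eq_iff: "cls G d k x = cls G d k y \<longleftrightarrow> (\<exists>z\<in>G (k - 1). x = y + d z)"
proof
  assume "cls G d k x = cls G d k y"
  then show "\<exists>z\<in>G (k - 1). x = y + d z" using mem_cls_self[of x k] unfolding cls_def by auto
qed (auto simp: cls_add_exact)

end

text \<open>\<open>tail_sum n p q b \<xi> 1\<close> is the Massey representative of the defining system \<open>\<xi>\<close>;
  in general \<open>tail_sum\<close> and \<open>tail_prod\<close> are the sums \<open>S_m\<close> and products \<open>T_m\<close> of the header,
  and \<open>tail_deg\<close> is the degree of \<open>T_m\<close>.\<close>

definition tail_prod :: "nat \<Rightarrow> (nat \<Rightarrow> 'a::real_algebra_1) \<Rightarrow> nat \<Rightarrow> 'a" where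
  "tail_prod n \<xi> m = prod_list (map \<xi> [m..<n+1])"

definition tail_sum ::
  "nat \<Rightarrow> int \<Rightarrow> (nat \<Rightarrow> int) \<Rightarrow> (nat \<Rightarrow> 'a::real_algebra_1) \<Rightarrow> (nat \<Rightarrow> 'a) \<Rightarrow> nat \<Rightarrow> 'a" where
  "tail_sum n p q b \<xi> m = (\<Sum>i=m..n. prod_list (map (\<lambda>j. bar (p + q j - 1) (\<xi> j)) [m..<i]) * b i
                                        * prod_list (map \<xi> [i+1..<n+1]))"

definition tail_deg :: "nat \<Rightarrow> int \<Rightarrow> (nat \<Rightarrow> int) \<Rightarrow> nat \<Rightarrow> int" where
  "tail_deg n p q m = (\<Sum>j=m..n. p + q j - 1)"

lemma tail_prod_end [simp]: "tail_prod n \<xi> (Suc n) = 1"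
  and tail_sum_end [simp]: "tail_sum n p q b \<xi> (Suc n) = 0"
  and tail_deg_end [simp]: "tail_deg n p q (Suc n) = 0"
  by (simp_all add: tail_prod_def tail_sum_def tail_deg_def)

lemma tail_prod_step: "m \<le> n \<Longrightarrow> tail_prod n \<xi> m = \<xi> m * tail_prod n \<xi> (Suc m)"
  using upt_conv_Cons[of m "Suc n"] by (simp add: tail_prod_def del: upt_Suc)

lemma tail_deg_step: "m \<le> n \<Longrightarrow> tail_deg n p q m = p + q m - 1 + tail_deg n p q (Suc m)"
  by (simp add: tail_deg_def sum.atLeast_Suc_atMost)

lemma tail_sum_step:
  assumes "m \<le> n"
  shows "tail_sum n p q b \<xi> m
           = b m * tail_prod n \<xi> (Suc m) + bar (p + q m - 1) (\<xi> m) * tail_sum n p q b \<xi> (Suc m)"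
proof -
  have "tail_sum n p q b \<xi> m = b m * tail_prod n \<xi> (Suc m)
      + (\<Sum>i=Suc m..n. bar (p + q m - 1) (\<xi> m) * (prod_list (map (\<lambda>j. bar (p + q j - 1) (\<xi> j)) [Suc m..<i])
                        * b i * prod_list (map \<xi> [i+1..<n+1])))"
    unfolding tail_sum_def tail_prod_def using assms
    by (simp add: sum.atLeast_Suc_atMost upt_conv_Cons mult.assoc)
  then show ?thesis by (simp add: tail_sum_def sum_distrib_left)
qed

lemma tail_sum_cong:
  "(\<And>i. i \<in> {m..n} \<Longrightarrow> b i = b' i \<and> \<xi> i = \<xi>' i) \<Longrightarrow> tail_sum n p q b \<xi> m = tail_sum n p q b' \<xi>' m"
  unfolding tail_sum_def
  by (intro sum.cong refl arg_cong2[where f="(*)"] arg_cong[where f=prod_list] map_cong) auto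

lemma massey_deg_eq_tail_deg: "massey_deg n p q = tail_deg n p q 1 + 1 - p"
  unfolding tail_deg_def massey_deg_def by (simp add: sum.distrib sum_subtractf algebra_simps)

definition defining_system ::
  "(int \<Rightarrow> 'a::real_algebra_1 set) \<Rightarrow> ('a \<Rightarrow> 'a) \<Rightarrow> nat \<Rightarrow> int \<Rightarrow> (nat \<Rightarrow> int) \<Rightarrow> 'a
     \<Rightarrow> (nat \<Rightarrow> 'a) \<Rightarrow> (nat \<Rightarrow> 'a) \<Rightarrow> bool" where
  "defining_system G d n p q a b \<xi> \<longleftrightarrow>
     (\<forall>i\<in>{1..n}. b i \<in> G (q i) \<and> d (b i) = 0 \<and> \<xi> i \<in> G (p + q i - 1) \<and> d (\<xi> i) = a * b i)"

lemma massey_eq_tail_sum: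
  "massey G d n p a q b = {cls G d (massey_deg n p q) (tail_sum n p q b \<xi> 1) | \<xi>.
     \<forall>i\<in>{1..n}. \<xi> i \<in> G (p + q i - 1) \<and> d (\<xi> i) = a * b i}"
  unfolding massey_def tail_sum_def by simp

lemma massey_cong:
  assumes "\<forall>i\<in>{1..n}. b i = b' i" shows "massey G d n p a q b = massey G d n p a q b'"
proof -
  have "tail_sum n p q b \<xi> 1 = tail_sum n p q b' \<xi> 1" for \<xi>
    using assms by (intro tail_sum_cong) auto
  then show ?thesis unfolding massey_eq_tail_sum using assms by simp
qed

context graded_dga
begin

lemma tail_mem:
  assumes sys: "defining_system G d n p q a b \<xi>" and m: "1 \<le> m" "m \<le> Suc n"
  shows "tail_prod n \<xi> m \<in> G (tail_deg n p q m) \<and> tail_sum n p q b \<xi> m \<in> G (tail_deg n p q m + 1 - p)"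
  using m(2)
proof (induction m rule: inc_induct)
  case (step m)
  then have mn: "m \<le> n" and "b m \<in> G (q m)" "\<xi> m \<in> G (p + q m - 1)"
    using sys m(1) by (auto simp: defining_system_def)
  with step.IH show ?case
    unfolding tail_prod_step[OF mn] tail_sum_step[OF mn] tail_deg_step[OF mn] bar_def
    by (auto intro!: mult_mem' add_mem scaleR_mem)
qed (simp add: zero_mem one_mem)

lemma d_tail:
  assumes a: "a \<in> G p" "even p" and sys: "defining_system G d n p q a b \<xi>"
    and m: "1 \<le> m" "m \<le> Suc n"
  shows "d (tail_sum n p q b \<xi> m) = 0 \<and> d (tail_prod n \<xi> m) = a * tail_sum n p q b \<xi> m"
  using m(2)
proof (induction m rule: inc_induct)
  case (step m)
  define k where "k = p + q m - 1"
  have mn: "m \<le> n" and x: "\<xi> m \<in> G k" "d (\<xi> m) = a * b m" and c: "b m \<in> G (q m)" "d (b m) = 0"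
    using step.hyps sys m(1) by (auto simp: defining_system_def k_def)
  have sk: "sgn_deg k = - sgn_deg (q m)" using a(2) by (simp add: k_def sgn_deg_def)
  show ?case
    unfolding tail_prod_step[OF mn] tail_sum_step[OF mn] k_def[symmetric] bar_def
    using step.IH
    by (simp add: leibniz[OF x(1)] leibniz[OF c(1)] x c sk comm_even[OF a c(1)] comm_even[OF a x(1)]
        algebra_simps)
qed simp

lemma defining_system_change:
  assumes a: "a \<in> G p" "d a = 0" "even p" and \<alpha>: "\<alpha> \<in> G (p - 1)"
    and sys: "defining_system G d n p q a b \<xi>"
    and \<beta>\<theta>: "\<forall>i\<in>{1..n}. \<beta> i \<in> G (q i - 1) \<and> \<theta> i \<in> G (p + q i - 2)"
  shows "defining_system G d n p q (a + d \<alpha>) (\<lambda>i. b i + d (\<beta> i))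
           (\<lambda>i. \<xi> i + \<alpha> * (b i + d (\<beta> i)) + a * \<beta> i + d (\<theta> i))"
  unfolding defining_system_def
proof
  fix i assume i: "i \<in> {1..n}"
  then have b: "b i \<in> G (q i)" "d (b i) = 0" and x: "\<xi> i \<in> G (p + q i - 1)" "d (\<xi> i) = a * b i"
    and \<beta>: "\<beta> i \<in> G (q i - 1)" and \<theta>: "\<theta> i \<in> G (p + q i - 2)"
    using sys \<beta>\<theta> by (auto simp: defining_system_def)
  have b': "b i + d (\<beta> i) \<in> G (q i)" using d_mem'[OF \<beta>] b by (simp add: add_mem)
  have "\<alpha> * (b i + d (\<beta> i)) \<in> G (p + q i - 1)" "a * \<beta> i \<in> G (p + q i - 1)" "d (\<theta> i) \<in> G (p + q i - 1)"
    using mult_mem'[OF \<alpha> b', where k="p + q i - 1"] mult_mem'[OF a(1) \<beta>, where k="p + q i - 1"]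
      d_mem'[OF \<theta>] by simp_all
  with x(1) have "\<xi> i + \<alpha> * (b i + d (\<beta> i)) + a * \<beta> i + d (\<theta> i) \<in> G (p + q i - 1)"
    by (intro add_mem)
  moreover have "d (\<alpha> * (b i + d (\<beta> i))) = d \<alpha> * (b i + d (\<beta> i))"
    using leibniz[OF \<alpha>] b by simp
  moreover have "d (a * \<beta> i) = a * d (\<beta> i)"
    using leibniz_even[OF a(1,3)] a(2) by simp
  ultimately show "b i + d (\<beta> i) \<in> G (q i) \<and> d (b i + d (\<beta> i)) = 0
      \<and> \<xi> i + \<alpha> * (b i + d (\<beta> i)) + a * \<beta> i + d (\<theta> i) \<in> G (p + q i - 1)
      \<and> d (\<xi> i + \<alpha> * (b i + d (\<beta> i)) + a * \<beta> i + d (\<theta> i)) = (a + d \<alpha>) * (b i + d (\<beta> i))"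
    using b b' x by (simp add: algebra_simps)
qed

text \<open>The inductive step of \<open>tail_change\<close> at index \<open>m\<close>, with \<open>x = \<xi>_m\<close> and \<open>c = b_m\<close>:
  \<open>S\<close>, \<open>T\<close> are the perturbed and \<open>S0\<close>, \<open>T0\<close> the original tails from \<open>m + 1\<close> on.\<close>

lemma tail_change_step_eqs:
  assumes a: "a \<in> G p" "even p" and \<alpha>: "\<alpha> \<in> G (p - 1)"
    and x: "x \<in> G k" "d x = a * c" and k: "k = p + j - 1"
    and c: "c \<in> G j" "d c = 0" and \<beta>: "\<beta> \<in> G (j - 1)" and \<theta>: "\<theta> \<in> G (k - 1)"
    and T: "d T = (a + d \<alpha>) * S" and S: "d S = 0"
    and E: "S - S0 = d E" and F: "T - T0 = d F + a * E + \<alpha> * S"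
  defines "c' \<equiv> c + d \<beta>" and "x' \<equiv> x + \<alpha> * (c + d \<beta>) + a * \<beta> + d \<theta>"
    and "E' \<equiv> \<beta> * T - sgn_deg k *\<^sub>R (c * F) + sgn_deg k *\<^sub>R (\<theta> * S) + x * E
               - sgn_deg k *\<^sub>R (\<alpha> * (\<beta> * S))"
    and "F' \<equiv> \<theta> * T + sgn_deg k *\<^sub>R (x * F) - \<theta> * (\<alpha> * S)"
  shows "(c' * T + sgn_deg k *\<^sub>R (x' * S)) - (c * T0 + sgn_deg k *\<^sub>R (x * S0)) = d E'"
    and "x' * T - x * T0 = d F' + a * E' + \<alpha> * (c' * T + sgn_deg k *\<^sub>R (x' * S))"
proof -
  define s where "s = sgn_deg k"
  have sj: "sgn_deg j = - s" and sk1: "sgn_deg (k - 1) = - s" and sj1: "sgn_deg (j - 1) = s"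
    and sp1: "sgn_deg (p - 1) = -1" and ss: "s * s = 1"
    using a(2) unfolding s_def k by (simp_all add: sgn_deg_def)
  have odd: "odd (p - 1)" using a(2) by simp
  have d\<theta>: "d \<theta> \<in> G k" and d\<alpha>: "d \<alpha> \<in> G p" using d_mem' \<theta> \<alpha> by auto
  note a_comm = comm_even[OF a] and d\<alpha>_comm = comm_even[OF d\<alpha> a(2)]
  note \<alpha>_comm = comm_odd[OF \<alpha> odd]
  have comm_rules:
    "\<And>z. x * (a * z) = a * (x * z)" "\<And>z. c * (a * z) = a * (c * z)"
    "\<And>z. \<beta> * (a * z) = a * (\<beta> * z)" "\<And>z. \<theta> * (a * z) = a * (\<theta> * z)"
    "\<And>z. a * (\<alpha> * z) = \<alpha> * (a * z)" "\<And>z. \<beta> * (d \<alpha> * z) = d \<alpha> * (\<beta> * z)"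
    "\<And>z. x * (\<alpha> * z) = s *\<^sub>R (\<alpha> * (x * z))" "\<And>z. c * (\<alpha> * z) = - s *\<^sub>R (\<alpha> * (c * z))"
    "\<And>z. d \<theta> * (\<alpha> * z) = s *\<^sub>R (\<alpha> * (d \<theta> * z))" "\<And>z. \<alpha> * (\<alpha> * z) = 0"
    using a_comm[OF x(1)] a_comm[OF c(1)] a_comm[OF \<beta>] a_comm[OF \<theta>] a_comm[OF \<alpha>]
      d\<alpha>_comm[OF \<beta>] \<alpha>_comm[OF x(1)] \<alpha>_comm[OF c(1)] \<alpha>_comm[OF d\<theta>] square_odd[OF \<alpha> odd]
    by (simp_all add: s_def sj)
  have T0: "T0 = T - d F - a * E - \<alpha> * S" and S0: "S0 = S - d E"
    using E F by (simp_all add: algebra_simps)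
  have "d E' = d \<beta> * T + s *\<^sub>R (\<beta> * (a * S)) + s *\<^sub>R (\<beta> * (d \<alpha> * S)) + c * d F + s *\<^sub>R (d \<theta> * S)
      + a * (c * E) + s *\<^sub>R (x * d E) - s *\<^sub>R (d \<alpha> * (\<beta> * S)) + s *\<^sub>R (\<alpha> * (d \<beta> * S))"
    unfolding E'_def s_def[symmetric]
    by (simp add: leibniz[OF \<beta>] leibniz[OF c(1)] leibniz[OF \<theta>] leibniz[OF x(1)] leibniz[OF \<alpha>]
        T S c x sj sk1 sj1 sp1 ss algebra_simps flip: s_def)
  then show "(c' * T + sgn_deg k *\<^sub>R (x' * S)) - (c * T0 + sgn_deg k *\<^sub>R (x * S0)) = d E'"
    unfolding T0 S0 c'_def x'_def s_def[symmetric] by (simp add: algebra_simps comm_rules)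
  have "d F' = d \<theta> * T - s *\<^sub>R (\<theta> * (a * S)) - s *\<^sub>R (\<theta> * (d \<alpha> * S)) + s *\<^sub>R (a * (c * F))
      + x * d F - d \<theta> * (\<alpha> * S) + s *\<^sub>R (\<theta> * (d \<alpha> * S))"
    unfolding F'_def s_def[symmetric]
    by (simp add: leibniz[OF \<theta>] leibniz[OF x(1)] leibniz[OF \<alpha>] T S x sk1 sp1 ss algebra_simps
        flip: s_def)
  then show "x' * T - x * T0 = d F' + a * E' + \<alpha> * (c' * T + sgn_deg k *\<^sub>R (x' * S))"
    unfolding T0 c'_def x'_def E'_def s_def[symmetric] by (simp add: algebra_simps comm_rules ss)
qed

lemma tail_change_step:
  assumes a: "a \<in> G p" "even p" and \<alpha>: "\<alpha> \<in> G (p - 1)"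
    and x: "x \<in> G k" "d x = a * c" and k: "k = p + j - 1"
    and c: "c \<in> G j" "d c = 0" and \<beta>: "\<beta> \<in> G (j - 1)" and \<theta>: "\<theta> \<in> G (k - 1)"
    and T: "T \<in> G D" "d T = (a + d \<alpha>) * S" and S: "S \<in> G (D + 1 - p)" "d S = 0"
    and E: "E \<in> G (D - p)" "S - S0 = d E"
    and F: "F \<in> G (D - 1)" "T - T0 = d F + a * E + \<alpha> * S"
  defines "c' \<equiv> c + d \<beta>" and "x' \<equiv> x + \<alpha> * (c + d \<beta>) + a * \<beta> + d \<theta>"
  shows "\<exists>E'\<in>G (k + D - p). \<exists>F'\<in>G (k + D - 1).
      (c' * T + sgn_deg k *\<^sub>R (x' * S)) - (c * T0 + sgn_deg k *\<^sub>R (x * S0)) = d E'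
    \<and> x' * T - x * T0 = d F' + a * E' + \<alpha> * (c' * T + sgn_deg k *\<^sub>R (x' * S))"
proof -
  define E' where "E' = \<beta> * T - sgn_deg k *\<^sub>R (c * F) + sgn_deg k *\<^sub>R (\<theta> * S) + x * E
                          - sgn_deg k *\<^sub>R (\<alpha> * (\<beta> * S))"
  define F' where "F' = \<theta> * T + sgn_deg k *\<^sub>R (x * F) - \<theta> * (\<alpha> * S)"
  have "\<beta> * T \<in> G (k + D - p)" "c * F \<in> G (k + D - p)" "\<theta> * S \<in> G (k + D - p)"
    "x * E \<in> G (k + D - p)" "\<alpha> * (\<beta> * S) \<in> G (k + D - p)"
    using \<beta> T c F \<theta> S x E \<alpha> by (auto intro!: mult_mem' simp: k)
  then have "E' \<in> G (k + D - p)" unfolding E'_def by (intro add_mem diff_mem scaleR_mem)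
  moreover have "\<theta> * T \<in> G (k + D - 1)" "x * F \<in> G (k + D - 1)" "\<theta> * (\<alpha> * S) \<in> G (k + D - 1)"
    using T F \<theta> S x \<alpha> by (auto intro!: mult_mem' simp: k)
  then have "F' \<in> G (k + D - 1)" unfolding F'_def by (intro add_mem diff_mem scaleR_mem)
  ultimately show ?thesis using tail_change_step_eqs[OF a \<alpha> x k c \<beta> \<theta> T(2) S(2) E(2) F(2)]
    unfolding c'_def x'_def E'_def F'_def by blast
qed

lemma tail_change:
  assumes a: "a \<in> G p" "d a = 0" "even p" and \<alpha>: "\<alpha> \<in> G (p - 1)"
    and sys: "defining_system G d n p q a b \<xi>"
    and \<beta>\<theta>: "\<forall>i\<in>{1..n}. \<beta> i \<in> G (q i - 1) \<and> \<theta> i \<in> G (p + q i - 2)"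
    and m: "1 \<le> m" "m \<le> Suc n"
  defines "b' \<equiv> \<lambda>i. b i + d (\<beta> i)" and "\<xi>' \<equiv> \<lambda>i. \<xi> i + \<alpha> * (b i + d (\<beta> i)) + a * \<beta> i + d (\<theta> i)"
  shows "\<exists>E\<in>G (tail_deg n p q m - p). \<exists>F\<in>G (tail_deg n p q m - 1).
           tail_sum n p q b' \<xi>' m - tail_sum n p q b \<xi> m = d E
         \<and> tail_prod n \<xi>' m - tail_prod n \<xi> m = d F + a * E + \<alpha> * tail_sum n p q b' \<xi>' m"
  using m(2)
proof (induction m rule: inc_induct)
  case base
  show ?case using zero_mem by (auto intro!: bexI[of _ 0])
next
  case (step m)
  have sys': "defining_system G d n p q (a + d \<alpha>) b' \<xi>'"
    unfolding b'_def \<xi>'_def by (rule defining_system_change[OF a \<alpha> sys \<beta>\<theta>])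
  have a': "a + d \<alpha> \<in> G p" using a(1) d_mem'[OF \<alpha>] by (simp add: add_mem)
  have mn: "m \<le> n" and m1: "1 \<le> Suc m" and mn': "Suc m \<le> Suc n" using step.hyps m(1) by auto
  then have "b m \<in> G (q m)" "d (b m) = 0" "\<xi> m \<in> G (p + q m - 1)" "d (\<xi> m) = a * b m"
    "\<beta> m \<in> G (q m - 1)" "\<theta> m \<in> G (p + q m - 1 - 1)"
    using sys \<beta>\<theta> step.hyps m(1) by (auto simp: defining_system_def)
  moreover obtain E F where "E \<in> G (tail_deg n p q (Suc m) - p)" "F \<in> G (tail_deg n p q (Suc m) - 1)"
    "tail_sum n p q b' \<xi>' (Suc m) - tail_sum n p q b \<xi> (Suc m) = d E"
    "tail_prod n \<xi>' (Suc m) - tail_prod n \<xi> (Suc m) = d F + a * E + \<alpha> * tail_sum n p q b' \<xi>' (Suc m)"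
    using step.IH by blast
  moreover have b'_m: "b' m = b m + d (\<beta> m)"
    and \<xi>'_m: "\<xi>' m = \<xi> m + \<alpha> * (b m + d (\<beta> m)) + a * \<beta> m + d (\<theta> m)"
    by (simp_all add: b'_def \<xi>'_def)
  ultimately show ?case
    using tail_mem[OF sys' m1 mn'] d_tail[OF a' a(3) sys' m1 mn']
    unfolding tail_prod_step[OF mn] tail_sum_step[OF mn] tail_deg_step[OF mn] bar_def mult_scaleR_left
      b'_m \<xi>'_m
    by (intro tail_change_step[OF a(1,3) \<alpha>]) auto
qed

lemma massey_rep_change:
  assumes a: "a \<in> G p" "d a = 0" "even p" and \<alpha>: "\<alpha> \<in> G (p - 1)"
    and sys: "defining_system G d n p q a b \<xi>"
    and \<beta>\<theta>: "\<forall>i\<in>{1..n}. \<beta> i \<in> G (q i - 1) \<and> \<theta> i \<in> G (p + q i - 2)"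
  shows "cls G d (massey_deg n p q) (tail_sum n p q (\<lambda>i. b i + d (\<beta> i))
             (\<lambda>i. \<xi> i + \<alpha> * (b i + d (\<beta> i)) + a * \<beta> i + d (\<theta> i)) 1)
       = cls G d (massey_deg n p q) (tail_sum n p q b \<xi> 1)"
proof -
  obtain E where "E \<in> G (tail_deg n p q 1 - p)" and "tail_sum n p q (\<lambda>i. b i + d (\<beta> i))
      (\<lambda>i. \<xi> i + \<alpha> * (b i + d (\<beta> i)) + a * \<beta> i + d (\<theta> i)) 1 - tail_sum n p q b \<xi> 1 = d E"
    using tail_change[OF a \<alpha> sys \<beta>\<theta>, of 1] by auto
  then show ?thesis
    unfolding cls_eq_iff massey_deg_eq_tail_deg by (intro bexI[of _ E]) (simp_all add: algebra_simps)
qed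

lemma massey_subset_change:
  assumes a: "a \<in> G p" "d a = 0" "even p" and \<alpha>: "\<alpha> \<in> G (p - 1)"
    and b: "\<forall>i\<in>{1..n}. b i \<in> G (q i) \<and> d (b i) = 0" and \<beta>: "\<forall>i\<in>{1..n}. \<beta> i \<in> G (q i - 1)"
  shows "massey G d n p a q b \<subseteq> massey G d n p (a + d \<alpha>) q (\<lambda>i. b i + d (\<beta> i))"
proof
  fix c assume "c \<in> massey G d n p a q b"
  then obtain \<xi> where c: "c = cls G d (massey_deg n p q) (tail_sum n p q b \<xi> 1)"
    and "\<forall>i\<in>{1..n}. \<xi> i \<in> G (p + q i - 1) \<and> d (\<xi> i) = a * b i"
    unfolding massey_eq_tail_sum by blast
  with b have sys: "defining_system G d n p q a b \<xi>" by (simp add: defining_system_def)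
  have \<beta>0: "\<forall>i\<in>{1..n}. \<beta> i \<in> G (q i - 1) \<and> 0 \<in> G (p + q i - 2)" using \<beta> zero_mem by blast
  show "c \<in> massey G d n p (a + d \<alpha>) q (\<lambda>i. b i + d (\<beta> i))"
    using defining_system_change[OF a \<alpha> sys \<beta>0] massey_rep_change[OF a \<alpha> sys \<beta>0]
    unfolding c massey_eq_tail_sum defining_system_def by auto
qed

lemma massey_eq_change:
  assumes a: "a \<in> G p" "d a = 0" "even p" and \<alpha>: "\<alpha> \<in> G (p - 1)" and a': "a' = a + d \<alpha>"
    and b: "\<forall>i\<in>{1..n}. b i \<in> G (q i) \<and> d (b i) = 0"
    and \<beta>: "\<forall>i\<in>{1..n}. \<beta> i \<in> G (q i - 1) \<and> b' i = b i + d (\<beta> i)"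
  shows "massey G d n p a q b = massey G d n p a' q b'"
proof
  show "massey G d n p a q b \<subseteq> massey G d n p a' q b'"
    using massey_subset_change[OF a \<alpha> b] \<beta> massey_cong[of n b' "\<lambda>i. b i + d (\<beta> i)"]
    unfolding a' by auto
  have "a' \<in> G p" "d a' = 0" "- \<alpha> \<in> G (p - 1)" "a = a' + d (- \<alpha>)"
    using a \<alpha> d_mem'[OF \<alpha>] by (auto simp: a' add_mem neg_mem)
  moreover have "\<forall>i\<in>{1..n}. b' i \<in> G (q i) \<and> d (b' i) = 0" "\<forall>i\<in>{1..n}. - \<beta> i \<in> G (q i - 1)"
    using b \<beta> d_mem' by (auto intro!: add_mem neg_mem)
  ultimately show "massey G d n p a' q b' \<subseteq> massey G d n p a q b"
    using massey_subset_change[where a=a' and \<alpha>="- \<alpha>" and b=b' and \<beta>="\<lambda>i. - \<beta> i"] a(3) \<beta>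
      massey_cong[of n b "\<lambda>i. b' i + d (- \<beta> i)"] by auto
qed

lemma exact_in_mult_change:
  assumes a: "a \<in> G p" "d a = 0" "even p" and \<alpha>: "\<alpha> \<in> G (p - 1)"
    and b: "b \<in> G j" "d b = 0" and \<beta>: "\<beta> \<in> G (j - 1)"
    and ab: "exact_in G d (p + j) (a * b)"
  shows "exact_in G d (p + j) ((a + d \<alpha>) * (b + d \<beta>))"
proof -
  obtain y where y: "y \<in> G (p + j - 1)" "a * b = d y" using ab unfolding exact_in_def by blast
  define w where "w = y + \<alpha> * b + a * \<beta> + \<alpha> * d \<beta>"
  have "\<alpha> * b \<in> G (p + j - 1)" "a * \<beta> \<in> G (p + j - 1)" "\<alpha> * d \<beta> \<in> G (p + j - 1)"
    using mult_mem'[OF \<alpha> b(1)] mult_mem'[OF a(1) \<beta>] mult_mem'[OF \<alpha> d_mem'[OF \<beta>, of j]]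
    by (simp_all add: algebra_simps)
  with y(1) have "w \<in> G (p + j - 1)" unfolding w_def by (intro add_mem)
  moreover have "(a + d \<alpha>) * (b + d \<beta>) = d w"
    unfolding w_def using a b
    by (simp add: leibniz[OF \<alpha>] leibniz_even[OF a(1,3)] y(2)[symmetric] algebra_simps)
  ultimately show ?thesis unfolding exact_in_def by auto
qed

end

locale dga_morphism = A: graded_dga GA dA + B: graded_dga GB dB
  for GA :: "int \<Rightarrow> 'a::real_algebra_1 set" and dA
    and GB :: "int \<Rightarrow> 'b::real_algebra_1 set" and dB +
  fixes \<psi> :: "'b \<Rightarrow> 'a"
  assumes hom: "dga_hom GB dB GA dA \<psi>"
begin

lemma linear_psi: "linear \<psi>"
  and psi_mult [simp]: "\<psi> (x * y) = \<psi> x * \<psi> y"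
  and psi_mem: "x \<in> GB k \<Longrightarrow> \<psi> x \<in> GA k"
  and psi_d [simp]: "\<psi> (dB x) = dA (\<psi> x)"
  using hom unfolding dga_hom_def by blast+

lemma psi_add [simp]: "\<psi> (x + y) = \<psi> x + \<psi> y"
  and psi_scaleR [simp]: "\<psi> (c *\<^sub>R x) = c *\<^sub>R \<psi> x"
  and psi_zero [simp]: "\<psi> 0 = 0"
  using linear_psi by (simp_all add: linear_add linear_scale linear_0)

lemma psi_prod_list: "\<psi> (prod_list (map f xs)) = prod_list (map (\<lambda>j. \<psi> (f j)) xs)"
  using hom by (induction xs) (simp_all add: dga_hom_def)

lemma psi_tail_sum: "\<psi> (tail_sum n p q b \<xi> m) = tail_sum n p q (\<lambda>i. \<psi> (b i)) (\<lambda>i. \<psi> (\<xi> i)) m"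
  unfolding tail_sum_def
  by (simp add: linear_sum[OF linear_psi] psi_prod_list bar_def comp_def)

lemma hmap_cls: "hmap GA dA k \<psi> (cls GB dB k x) = cls GA dA k (\<psi> x)"
proof -
  have "(SOME y. y \<in> cls GB dB k x) \<in> cls GB dB k x"
    using B.mem_cls_self by (rule someI)
  then obtain z where "z \<in> GB (k - 1)" "(SOME y. y \<in> cls GB dB k x) = x + dB z"
    unfolding cls_def by blast
  then show ?thesis unfolding hmap_def by (simp add: A.cls_add_exact psi_mem)
qed

lemma hmap_massey_subset:
  "hmap GA dA (massey_deg n p q) \<psi> ` massey GB dB n p a q b
     \<subseteq> massey GA dA n p (\<psi> a) q (\<lambda>i. \<psi> (b i))"
proof
  fix c assume "c \<in> hmap GA dA (massey_deg n p q) \<psi> ` massey GB dB n p a q b"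
  then obtain \<xi> where "c = cls GA dA (massey_deg n p q) (tail_sum n p q (\<lambda>i. \<psi> (b i)) (\<lambda>i. \<psi> (\<xi> i)) 1)"
    and "\<forall>i\<in>{1..n}. \<xi> i \<in> GB (p + q i - 1) \<and> dB (\<xi> i) = a * b i"
    unfolding massey_eq_tail_sum by (auto simp: hmap_cls psi_tail_sum)
  then show "c \<in> massey GA dA n p (\<psi> a) q (\<lambda>i. \<psi> (b i))"
    unfolding massey_eq_tail_sum by (auto intro!: exI[of _ "\<lambda>i. \<psi> (\<xi> i)"] psi_mem simp flip: psi_d)
qed

end

locale quasi_isomorphism = dga_morphism +
  assumes hmap_bij: "bij_betw (hmap GA dA k \<psi>) (cohom GB dB k) (cohom GA dA k)"
begin

lemma exact_reflect:
  assumes x: "x \<in> GB k" "dB x = 0" and "exact_in GA dA k (\<psi> x)"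
  shows "exact_in GB dB k x"
proof -
  obtain y where y: "y \<in> GA (k - 1)" "\<psi> x = dA y" using assms(3) unfolding exact_in_def by blast
  have "hmap GA dA k \<psi> (cls GB dB k x) = hmap GA dA k \<psi> (cls GB dB k 0)"
    unfolding hmap_cls using A.cls_add_exact[OF y(1), of 0] y(2) by simp
  moreover have "cls GB dB k x \<in> cohom GB dB k" "cls GB dB k 0 \<in> cohom GB dB k"
    using x B.zero_mem unfolding cohom_def by auto
  ultimately have "cls GB dB k x = cls GB dB k 0"
    using hmap_bij unfolding bij_betw_def inj_on_def by blast
  then show ?thesis unfolding B.cls_eq_iff exact_in_def by auto
qed

lemma lift_closed:
  assumes "y \<in> GA k" "dA y = 0"
  shows "\<exists>z\<in>GB k. dB z = 0 \<and> (\<exists>\<theta>\<in>GA (k - 1). y = \<psi> z + dA \<theta>)"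
proof -
  have "cls GA dA k y \<in> hmap GA dA k \<psi> ` cohom GB dB k"
    using assms hmap_bij unfolding bij_betw_def cohom_def by blast
  then obtain z where "z \<in> GB k" "dB z = 0" "cls GA dA k y = cls GA dA k (\<psi> z)"
    unfolding cohom_def by (auto simp: hmap_cls)
  then show ?thesis unfolding A.cls_eq_iff by blast
qed

lemma lift_primitive:
  assumes \<eta>: "\<eta> \<in> GB k" and y: "y \<in> GA k" "dA y = dA (\<psi> \<eta>)"
  shows "\<exists>\<eta>'\<in>GB k. dB \<eta>' = dB \<eta> \<and> (\<exists>\<theta>\<in>GA (k - 1). y = \<psi> \<eta>' + dA \<theta>)"
proof -
  obtain z \<theta> where "z \<in> GB k" "dB z = 0" "\<theta> \<in> GA (k - 1)" "y - \<psi> \<eta> = \<psi> z + dA \<theta>"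
    using lift_closed[of "y - \<psi> \<eta>" k] y psi_mem[OF \<eta>] by (auto intro: A.diff_mem)
  then show ?thesis using \<eta> by (intro bexI[of _ "\<eta> + z"]) (auto intro: B.add_mem simp: algebra_simps)
qed

lemma lift_defining_system:
  assumes md: "massey_defined GB dB n p a q b"
    and \<xi>: "\<forall>i\<in>{1..n}. \<xi> i \<in> GA (p + q i - 1) \<and> dA (\<xi> i) = \<psi> a * \<psi> (b i)"
  shows "\<exists>\<eta> \<theta>. \<forall>i\<in>{1..n}. \<eta> i \<in> GB (p + q i - 1) \<and> dB (\<eta> i) = a * b i
           \<and> \<theta> i \<in> GA (p + q i - 2) \<and> \<xi> i = \<psi> (\<eta> i) + dA (\<theta> i)"
proof -
  have "\<exists>\<eta>\<in>GB (p + q i - 1). dB \<eta> = a * b i \<and> (\<exists>\<theta>\<in>GA (p + q i - 2). \<xi> i = \<psi> \<eta> + dA \<theta>)"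
    if i: "i \<in> {1..n}" for i
  proof -
    have "exact_in GB dB (p + q i) (a * b i)" using md i unfolding massey_defined_def by blast
    then obtain \<eta> where "\<eta> \<in> GB (p + q i - 1)" "a * b i = dB \<eta>" unfolding exact_in_def by blast
    with \<xi> i show ?thesis using lift_primitive[of \<eta> "p + q i - 1" "\<xi> i"] by (auto simp flip: psi_mult)
  qed
  then show ?thesis by metis
qed

lemma hmap_massey:
  assumes md: "massey_defined GB dB n p a q b"
  shows "hmap GA dA (massey_deg n p q) \<psi> ` massey GB dB n p a q b
           = massey GA dA n p (\<psi> a) q (\<lambda>i. \<psi> (b i))"
proof
  show "massey GA dA n p (\<psi> a) q (\<lambda>i. \<psi> (b i))
          \<subseteq> hmap GA dA (massey_deg n p q) \<psi> ` massey GB dB n p a q b"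
  proof
    fix c assume "c \<in> massey GA dA n p (\<psi> a) q (\<lambda>i. \<psi> (b i))"
    then obtain \<xi> where c: "c = cls GA dA (massey_deg n p q) (tail_sum n p q (\<lambda>i. \<psi> (b i)) \<xi> 1)"
      and \<xi>: "\<forall>i\<in>{1..n}. \<xi> i \<in> GA (p + q i - 1) \<and> dA (\<xi> i) = \<psi> a * \<psi> (b i)"
      unfolding massey_eq_tail_sum by blast
    obtain \<eta> \<theta> where \<eta>\<theta>: "\<forall>i\<in>{1..n}. \<eta> i \<in> GB (p + q i - 1) \<and> dB (\<eta> i) = a * b i
        \<and> \<theta> i \<in> GA (p + q i - 2) \<and> \<xi> i = \<psi> (\<eta> i) + dA (\<theta> i)"
      using lift_defining_system[OF md \<xi>] by blast
    have a: "\<psi> a \<in> GA p" "dA (\<psi> a) = 0" "even p"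
      using md psi_mem unfolding massey_defined_def by (auto simp flip: psi_d)
    have sys: "defining_system GA dA n p q (\<psi> a) (\<lambda>i. \<psi> (b i)) (\<lambda>i. \<psi> (\<eta> i))"
      using md \<eta>\<theta> psi_mem unfolding massey_defined_def defining_system_def by (auto simp flip: psi_d)
    have "tail_sum n p q (\<lambda>i. \<psi> (b i)) \<xi> 1
        = tail_sum n p q (\<lambda>i. \<psi> (b i)) (\<lambda>i. \<psi> (\<eta> i) + dA (\<theta> i)) 1"
      using \<eta>\<theta> by (intro tail_sum_cong) auto
    then have "c = cls GA dA (massey_deg n p q) (tail_sum n p q (\<lambda>i. \<psi> (b i)) (\<lambda>i. \<psi> (\<eta> i)) 1)"
      using A.massey_rep_change[OF a A.zero_mem sys, of "\<lambda>_. 0" \<theta>] \<eta>\<theta> A.zero_mem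
      unfolding c by simp
    also have "\<dots> = hmap GA dA (massey_deg n p q) \<psi> (cls GB dB (massey_deg n p q) (tail_sum n p q b \<eta> 1))"
      by (simp add: hmap_cls psi_tail_sum)
    finally show "c \<in> hmap GA dA (massey_deg n p q) \<psi> ` massey GB dB n p a q b"
      using \<eta>\<theta> unfolding massey_eq_tail_sum by blast
  qed
qed (rule hmap_massey_subset)

lemma massey_transfer:
  assumes md: "massey_defined GA dA n p a q b"
    and a': "a' \<in> GB p" "dB a' = 0" "cls GA dA p (\<psi> a') = cls GA dA p a"
    and b': "\<forall>i\<in>{1..n}. b' i \<in> GB (q i) \<and> dB (b' i) = 0
               \<and> cls GA dA (q i) (\<psi> (b' i)) = cls GA dA (q i) (b i)"
  shows "massey_defined GB dB n p a' q b'
    \<and> hmap GA dA (massey_deg n p q) \<psi> ` massey GB dB n p a' q b' = massey GA dA n p a q b"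
proof -
  have a: "a \<in> GA p" "dA a = 0" "even p" and b: "\<forall>i\<in>{1..n}. b i \<in> GA (q i) \<and> dA (b i) = 0"
    using md unfolding massey_defined_def by auto
  obtain \<alpha> where \<alpha>: "\<alpha> \<in> GA (p - 1)" "\<psi> a' = a + dA \<alpha>" using a'(3) A.cls_eq_iff by blast
  have "\<forall>i\<in>{1..n}. \<exists>\<beta>\<in>GA (q i - 1). \<psi> (b' i) = b i + dA \<beta>"
    using b' by (simp add: A.cls_eq_iff)
  then obtain \<beta> where \<beta>: "\<forall>i\<in>{1..n}. \<beta> i \<in> GA (q i - 1) \<and> \<psi> (b' i) = b i + dA (\<beta> i)"
    using bchoice[of "{1..n}"] by (metis (no_types, lifting))
  have md': "massey_defined GB dB n p a' q b'"
    unfolding massey_defined_def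
  proof (intro conjI ballI)
    fix i assume i: "i \<in> {1..n}"
    have "exact_in GA dA (p + q i) (\<psi> (a' * b' i))"
      using A.exact_in_mult_change[OF a \<alpha>(1), of "b i" "q i" "\<beta> i"] md b \<beta> i \<alpha>(2)
      unfolding massey_defined_def by auto
    moreover have "a' * b' i \<in> GB (p + q i)" "dB (a' * b' i) = 0"
      using B.mult_mem a' b' i B.leibniz[OF a'(1)] by auto
    ultimately show "exact_in GB dB (p + q i) (a' * b' i)" using exact_reflect by blast
  qed (use a' b' a in auto)
  have "massey GA dA n p a q b = massey GA dA n p (\<psi> a') q (\<lambda>i. \<psi> (b' i))"
    using \<beta> by (intro A.massey_eq_change[OF a \<alpha> b]) auto
  with hmap_massey[OF md'] md' show ?thesis by simp
qed

end

lemma quasi_isomorphismI: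
  assumes "dga GA dA" "dga GB dB" "quasi_iso GB dB GA dA \<psi>"
  shows "quasi_isomorphism GA dA GB dB \<psi>"
proof (intro quasi_isomorphism.intro dga_morphism.intro graded_dgaI quasi_isomorphism_axioms.intro
    dga_morphism_axioms.intro)
  show "dga_hom GB dB GA dA \<psi>" "bij_betw (hmap GA dA k \<psi>) (cohom GB dB k) (cohom GA dA k)" for k
    using assms(3) unfolding quasi_iso_def by blast+
qed (fact assms)+

theorem lemma2p9:
  fixes GA :: "int \<Rightarrow> 'a::real_algebra_1 set" and dA :: "'a \<Rightarrow> 'a"
    and GB :: "int \<Rightarrow> 'b::real_algebra_1 set" and dB :: "'b \<Rightarrow> 'b"
    and \<psi> :: "'b \<Rightarrow> 'a" and n :: nat and p :: int and q :: "nat \<Rightarrow> int"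
  assumes "dga GA dA" and "dga GB dB" and "quasi_iso GB dB GA dA \<psi>"
    and "1 \<le> n" and "0 \<le> p" and "\<forall>i\<in>{1..n}. 0 \<le> q i"
  shows
   "(\<forall>a b a' b'.
       massey_defined GA dA n p a q b
       \<and> a' \<in> GB p \<and> dB a' = 0
       \<and> cls GA dA p (\<psi> a') = cls GA dA p a
       \<and> (\<forall>i\<in>{1..n}. b' i \<in> GB (q i) \<and> dB (b' i) = 0
                      \<and> cls GA dA (q i) (\<psi> (b' i)) = cls GA dA (q i) (b i))
     \<longrightarrow> massey_defined GB dB n p a' q b'
         \<and> hmap GA dA (massey_deg n p q) \<psi> ` massey GB dB n p a' q b'
             = massey GA dA n p a q b)
  \<and> (\<forall>a' b'.
       massey_defined GB dB n p a' q b'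
     \<longrightarrow> hmap GA dA (massey_deg n p q) \<psi> ` massey GB dB n p a' q b'
             = massey GA dA n p (\<psi> a') q (\<lambda>i. \<psi> (b' i)))"
proof -
  interpret quasi_isomorphism GA dA GB dB \<psi>
    using assms(1-3) by (rule quasi_isomorphismI)
  show ?thesis
  proof ((rule conjI; intro allI impI), goal_cases)
    case (1 a b a' b')
    then show ?case by (elim conjE) (rule massey_transfer)
  next
    case (2 a' b')
    then show ?case by (rule hmap_massey)
  qed
qed

end
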